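(* The cone $\Omega$ has dimension $15$, the maximal possible (equal to $\operatorname{rank}A$).
   Context: Kummer surface. Let $C$ be a very general smooth projective curve of genus 2, $J(C)$ its Jacobian, and $S$ the minimal resolution of the Kummer quartic $J(C)/\{\pm1\}\subset\mathbb{P}^3$; $S$ is a K3 surface of Picard number 17 and $NS(S)=\mathrm{Pic}(S)$. The group $J(C)_2$ is indexed as $\{0\}\cup\{ij:1\le i<j\le 6\}$ (unordered pairs, also $0=66$), with $0$ the identity, $ij+jk=ik$, and $ij+kl=mn$ whenever $\{i,j,k,l,m,n\}=\{1,\dots,6\}$. For $\alpha\in J(C)_2$, $N_\alpha$ is the exceptional $(-2)$-curve over the node indexed by $\alpha$ and $T_\alpha$ is the trope indexed by $\alpha$ (a smooth rational $(-2)$-curve). Each $T_\beta$ meets exactly the six $N_\alpha$ with $\alpha\in I(T_\beta)$, where $I(T_0)=\{0,16,26,36,46,56\}$, $I(T_{i6})=\{0,i6,ij,ik,il,im\}$, $I(T_{ij})=\{i6,j6,ij,kl,km,lm\}$ for $\{i,j,k,l,m\}=\{1,\dots,5\}$. $\Lambda$ is the pullback of the hyperplane class; $\Lambda^2=4$, $N_\alpha^2=-2$, $\Lambda\cdot N_\alpha=0$, $N_\alpha\cdot N_\beta=0$ for $\alpha\neq\beta$, and $T_\beta=\tfrac12(\Lambda-\sum_{\alpha\in I(T_\beta)}N_\alpha)$. The switch $\sigma$ is the involution of $S$ with $N_\alpha\leftrightarrow T_\alpha$, $\Lambda\mapsto3\Lambda-\sum_\alpha N_\alpha$. A Göpel tetrad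 is a 4-element subset $g\subset J(C)_2$ no three elements of which lie in a common $I(T_\beta)$. A Weber hexad is a 6-element subset $w\subset J(C)_2$ no four elements of which lie in a common $I(T_\beta)$ or a common Göpel tetrad. $r_g:=\Lambda-\sum_{\alpha\in g}N_\alpha$, $r_w:=3\Lambda-2\sum_{\alpha\in w}N_\alpha$. Lattices. $R:=T_0$; $b:=\tfrac12\big(3\Lambda-\sum_{i=1}^6N_{i6}-2\sum_{1\le i<j\le5}N_{ij}\big)$; $B:=\mathbb{Z}b+\mathbb{Z}R$; $A:=B^\perp\subset NS(S)$ (rank 15). Domain: $P(S)$ is the component of $\{x^2>0\}$ in $NS(S)\otimes\mathbb{R}$ containing ample classes; $D':=\{x\in P(S): x\cdot r>0$ for all $r$ among $N_\alpha,T_\alpha,\Lambda-2N_\alpha,\sigma(\Lambda-2N_\alpha)$ ($\alpha\in J(C)_2$), $r_g$ (all 60 Göpel tetrads), $r_w$ (all 192 Weber hexads)$\}$; $\Omega:=\overline{D'}\cap(A\otimes\mathbb{R})$. *)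

theory Defs
  imports "HOL-Analysis.Analysis"
begin

text \<open>An element of J(C)_2 is encoded as a set of naturals: the identity 0 (= 66) is the
empty set, and the element ij (1 <= i < j <= 6) is the unordered pair {i,j}.\<close>

definition J2 :: "nat set set" where
  "J2 = insert {} {{i, j} | i j. 1 \<le> i \<and> i < j \<and> j \<le> 6}"

definition Itrope :: "nat set \<Rightarrow> nat set set" where
  "Itrope beta =
    (if beta = {} then insert {} {{i, 6} | i. 1 \<le> i \<and> i \<le> 5}
     else if 6 \<in> beta then
       (let i = the_elem (beta - {6}) in
          {{}, beta} \<union> {{i, j} | j. 1 \<le> j \<and> j \<le> 5 \<and> j \<noteq> i})
     else
       {beta - {i} \<union> {6} | i. i \<in> beta} \<union> {beta}
       \<union> {{k, l} | k l. 1 \<le> k \<and> k < l \<and> l \<le> 5 \<and> k \<notin> beta \<and> l \<notin> beta})"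

definition goepel :: "nat set set \<Rightarrow> bool" where
  "goepel g \<longleftrightarrow> g \<subseteq> J2 \<and> card g = 4 \<and> (\<forall>beta\<in>J2. card (g \<inter> Itrope beta) \<le> 2)"

definition weber :: "nat set set \<Rightarrow> bool" where
  "weber w \<longleftrightarrow> w \<subseteq> J2 \<and> card w = 6
     \<and> (\<forall>beta\<in>J2. card (w \<inter> Itrope beta) \<le> 3)
     \<and> (\<forall>g. goepel g \<longrightarrow> card (w \<inter> g) \<le> 3)"

typedef kidx = "insert None (Some ` J2)" by blast

instance kidx :: finite
proof
  have "finite J2" unfolding J2_def
  proof -
    have "{{i, j} | i j. 1 \<le> i \<and> i < j \<and> j \<le> (6::nat)} \<subseteq> (\<lambda>(i,j). {i,j}) ` ({..6} \<times> {..6})"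
      by auto
    then show "finite (insert {} {{i, j} | i j. 1 \<le> i \<and> i < j \<and> j \<le> (6::nat)})"
      by (meson finite_SigmaI finite_atMost finite_imageI finite_insert finite_subset)
  qed
  then have "finite (insert None (Some ` J2))" by simp
  then have "finite (Abs_kidx ` insert None (Some ` J2))" by simp
  moreover have "UNIV = Abs_kidx ` insert None (Some ` J2)"
    using type_definition.Abs_image[OF type_definition_kidx] by simp
  ultimately show "finite (UNIV :: kidx set)" by metis
qed

type_synonym NSR = "real ^ kidx"

definition Lam :: NSR where "Lam = axis (Abs_kidx None) 1"
definition Nd :: "nat set \<Rightarrow> NSR" where "Nd a = axis (Abs_kidx (Some a)) 1"

definition ip :: "NSR \<Rightarrow> NSR \<Rightarrow> real" where
  "ip x y = 4 * (x $ Abs_kidx None) * (y $ Abs_kidx None)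
      - 2 * (\<Sum>a\<in>J2. (x $ Abs_kidx (Some a)) * (y $ Abs_kidx (Some a)))"

definition Tr :: "nat set \<Rightarrow> NSR" where
  "Tr b = (1/2) *\<^sub>R (Lam - (\<Sum>a\<in>Itrope b. Nd a))"

definition switch :: "NSR \<Rightarrow> NSR" where
  "switch x = (x $ Abs_kidx None) *\<^sub>R (3 *\<^sub>R Lam - (\<Sum>a\<in>J2. Nd a))
              + (\<Sum>a\<in>J2. (x $ Abs_kidx (Some a)) *\<^sub>R Tr a)"

definition r_goepel :: "nat set set \<Rightarrow> NSR" where
  "r_goepel g = Lam - (\<Sum>a\<in>g. Nd a)"

definition r_weber :: "nat set set \<Rightarrow> NSR" where
  "r_weber w = 3 *\<^sub>R Lam - 2 *\<^sub>R (\<Sum>a\<in>w. Nd a)"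

definition walls :: "NSR set" where
  "walls = Nd ` J2 \<union> Tr ` J2 \<union> (\<lambda>a. Lam - 2 *\<^sub>R Nd a) ` J2
     \<union> (\<lambda>a. switch (Lam - 2 *\<^sub>R Nd a)) ` J2
     \<union> r_goepel ` {g. goepel g} \<union> r_weber ` {w. weber w}"

text \<open>Positive cone component containing the ample classes = the one containing Lambda
(Lambda is nef with Lambda^2 = 4 > 0, hence lies in the closure of the ample cone).\<close>
definition Pcone :: "NSR set" where
  "Pcone = {x. ip x x > 0 \<and> ip x Lam > 0}"

definition Dprime :: "NSR set" where
  "Dprime = {x \<in> Pcone. \<forall>r\<in>walls. ip x r > 0}"

definition Rcls :: NSR where "Rcls = Tr {}"

definition bcls :: NSR where
  "bcls = (1/2) *\<^sub>R (3 *\<^sub>R Lam - (\<Sum>i\<in>{1..6::nat}. Nd (if i = 6 then {} else {i, 6}))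
            - 2 *\<^sub>R (\<Sum>p\<in>{{i, j} | i j. 1 \<le> i \<and> i < j \<and> j \<le> (5::nat)}. Nd p))"

text \<open>A tensor R = orthogonal complement of B = Zb + ZR in NS(S) tensor R.\<close>
definition AR :: "NSR set" where
  "AR = {x. ip x bcls = 0 \<and> ip x Rcls = 0}"

definition Omega :: "NSR set" where
  "Omega = closure Dprime \<inter> AR"

end

theory Submission
  imports Defs
begin

text \<open>Let \<open>I_0 = I(T_0)\<close> and \<open>x0 = 15 \<Lambda> - 5 \<Sum>{N_\<alpha> | \<alpha> \<in> I_0} - 3 \<Sum>{N_\<alpha> | \<alpha> \<notin> I_0}\<close>;
  it is orthogonal to \<open>b\<close> and \<open>R\<close>, so it lies in \<open>A \<otimes> \<real>\<close>. Every class with \<open>\<Lambda>\<close>-coordinate at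
  least \<open>29/2\<close> whose \<open>N\<close>-coordinates stay close to those of \<open>x0\<close> lies in the positive cone and is
  positive on all walls of \<open>D'\<close> except \<open>R\<close>: the walls \<open>r_g\<close>, \<open>r_w\<close>, \<open>\<Lambda> - 2N_\<alpha>\<close> and
  \<open>\<sigma>(\<Lambda> - 2N_\<alpha>)\<close> put few nodes against a large multiple of \<open>\<Lambda>\<close>, and a trope \<open>T_\<beta> \<noteq> T_0\<close>
  meets at most two nodes of \<open>I_0\<close>. Adding a small multiple of \<open>\<Lambda>\<close> to a class of \<open>A \<otimes> \<real>\<close>
  near \<open>x0\<close> makes it positive on \<open>R\<close> as well, so \<open>\<Omega>\<close> contains a neighbourhood of \<open>x0\<close> in
  \<open>A \<otimes> \<real>\<close>. Finally \<open>dim (A \<otimes> \<real>) = 17 - 2\<close>, as the pairings with \<open>b\<close> and \<open>R\<close> are independent.\<close>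

lemma pairs_upto_6:
  "{(i, j). 1 \<le> i \<and> i < j \<and> j \<le> (6::nat)} =
   set [(1,2),(1,3),(1,4),(1,5),(1,6),(2,3),(2,4),(2,5),(2,6),(3,4),(3,5),(3,6),(4,5),(4,6),(5,6)]"
  (is "_ = ?R")
proof (intro equalityI subsetI)
  fix p assume "p \<in> {(i, j). 1 \<le> i \<and> i < j \<and> j \<le> (6::nat)}"
  then obtain i j where p: "p = (i, j)" and ij: "1 \<le> i \<and> i < j \<and> j \<le> 6" by auto
  then have "j = 2 \<or> j = 3 \<or> j = 4 \<or> j = 5 \<or> j = 6" by linarith
  then show "p \<in> ?R" using ij unfolding p by (elim disjE; simp; linarith)
qed auto

lemma pairs_upto_5:
  "{(i, j). 1 \<le> i \<and> i < j \<and> j \<le> (5::nat)} =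
   set [(1,2),(1,3),(1,4),(1,5),(2,3),(2,4),(2,5),(3,4),(3,5),(4,5)]"
proof -
  have "{(i, j). 1 \<le> i \<and> i < j \<and> j \<le> (5::nat)} =
        {p \<in> {(i, j). 1 \<le> i \<and> i < j \<and> j \<le> 6}. snd p \<noteq> 6}"
    by auto
  then show ?thesis unfolding pairs_upto_6 set_filter[symmetric] by simp
qed

lemma J2_eq:
  "J2 = {{},{1,2},{1,3},{1,4},{1,5},{1,6},{2,3},{2,4},{2,5},{2,6},{3,4},{3,5},{3,6},{4,5},{4,6},{5,6}}"
proof -
  have "{{i, j} | i j. 1 \<le> i \<and> i < j \<and> j \<le> (6::nat)} =
        (\<lambda>(i, j). {i, j}) ` {(i, j). 1 \<le> i \<and> i < j \<and> j \<le> 6}"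
    by auto
  then show ?thesis unfolding J2_def pairs_upto_6 by simp
qed

lemma finite_J2: "finite J2"
  by (simp add: J2_eq)

lemma card_J2: "card J2 = 16"
  by (simp add: J2_eq doubleton_eq_iff)

lemma Itrope_eq:
  "Itrope beta =
    (if beta = {} then insert {} ((\<lambda>i. {i, 6}) ` {1, 2, 3, 4, 5})
     else if 6 \<in> beta then
       {{}, beta} \<union> (\<lambda>j. {the_elem (beta - {6}), j}) `
         set (filter (\<lambda>j. j \<noteq> the_elem (beta - {6})) [1, 2, 3, 4, 5])
     else (\<lambda>i. beta - {i} \<union> {6}) ` beta \<union> {beta} \<union> (\<lambda>(k, l). {k, l}) `
       set (filter (\<lambda>p. fst p \<notin> beta \<and> snd p \<notin> beta)
         [(1,2),(1,3),(1,4),(1,5),(2,3),(2,4),(2,5),(3,4),(3,5),(4,5)]))"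
proof -
  have T0: "{{i, 6} | i. 1 \<le> i \<and> i \<le> (5::nat)} = (\<lambda>i. {i, 6}) ` {1, 2, 3, 4, 5}"
    by (auto simp: le_Suc_eq numeral_eq_Suc)
  have Ti6: "{{i, j} | j. 1 \<le> j \<and> j \<le> (5::nat) \<and> j \<noteq> i} =
      (\<lambda>j. {i, j}) ` set (filter (\<lambda>j. j \<noteq> i) [1, 2, 3, 4, 5])" for i
  proof -
    have "{{i, j} | j. 1 \<le> j \<and> j \<le> (5::nat) \<and> j \<noteq> i} =
        (\<lambda>j. {i, j}) ` {j \<in> set [1, 2, 3, 4, 5]. j \<noteq> i}"
      by (auto simp: le_Suc_eq numeral_eq_Suc)
    then show ?thesis unfolding set_filter .
  qed
  have Tij_via_6: "{beta - {i} \<union> {6::nat} | i. i \<in> beta} = (\<lambda>i. beta - {i} \<union> {6}) ` beta"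
    by auto
  have Tij_disjoint: "{{k, l} | k l. 1 \<le> k \<and> k < l \<and> l \<le> (5::nat) \<and> k \<notin> beta \<and> l \<notin> beta} =
      (\<lambda>(k, l). {k, l}) ` {p \<in> {(k, l). 1 \<le> k \<and> k < l \<and> l \<le> 5}. fst p \<notin> beta \<and> snd p \<notin> beta}"
    by force
  show ?thesis
    unfolding Itrope_def T0 Ti6 Tij_via_6 Tij_disjoint pairs_upto_5 Let_def set_filter[symmetric] ..
qed

lemma Itrope_J2:
  assumes "b \<in> J2"
  shows Itrope_subset_J2: "Itrope b \<subseteq> J2"
    and card_Itrope: "card (Itrope b) = 6"
    and card_Itrope_Int_Itrope_empty: "b \<noteq> {} \<Longrightarrow> card (Itrope b \<inter> Itrope {}) \<le> 2"
proof -
  have "Itrope b \<subseteq> J2 \<and> card (Itrope b) = 6 \<and> (b \<noteq> {} \<longrightarrow> card (Itrope b \<inter> Itrope {}) \<le> 2)"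
    using assms unfolding J2_eq
    by (elim insertE emptyE; simp add: Itrope_eq insert_Diff_if doubleton_eq_iff)
  then show "Itrope b \<subseteq> J2" "card (Itrope b) = 6" "b \<noteq> {} \<Longrightarrow> card (Itrope b \<inter> Itrope {}) \<le> 2"
    by auto
qed

lemma empty_in_J2: "{} \<in> J2"
  by (simp add: J2_def)

lemma finite_Itrope: "b \<in> J2 \<Longrightarrow> finite (Itrope b)"
  using Itrope_subset_J2 finite_J2 finite_subset by blast

lemma card_J2_Diff_Itrope: "b \<in> J2 \<Longrightarrow> card (J2 - Itrope b) = 10"
  by (simp add: card_Diff_subset finite_Itrope Itrope_subset_J2 card_Itrope card_J2)

abbreviation lam_idx :: kidx where "lam_idx \<equiv> Abs_kidx None"
abbreviation node_idx :: "nat set \<Rightarrow> kidx" where "node_idx a \<equiv> Abs_kidx (Some a)"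

lemma node_idx_inject: "a \<in> J2 \<Longrightarrow> b \<in> J2 \<Longrightarrow> node_idx a = node_idx b \<longleftrightarrow> a = b"
  by (simp add: Abs_kidx_inject)

lemma node_idx_neq_lam_idx [simp]: "a \<in> J2 \<Longrightarrow> node_idx a \<noteq> lam_idx"
  and lam_idx_neq_node_idx [simp]: "a \<in> J2 \<Longrightarrow> lam_idx \<noteq> node_idx a"
  by (simp_all add: Abs_kidx_inject)

lemma UNIV_kidx: "(UNIV :: kidx set) = insert lam_idx (node_idx ` J2)"
  using type_definition.Abs_image[OF type_definition_kidx] by auto

lemma sum_UNIV_kidx: "(\<Sum>k\<in>UNIV. f k) = f lam_idx + (\<Sum>a\<in>J2. f (node_idx a))"
proof -
  have "(\<Sum>k\<in>UNIV. f k) = f lam_idx + (\<Sum>k\<in>node_idx ` J2. f k)"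
    unfolding UNIV_kidx by (rule sum.insert) (auto simp: finite_J2)
  also have "(\<Sum>k\<in>node_idx ` J2. f k) = (\<Sum>a\<in>J2. f (node_idx a))"
    by (rule sum.reindex_cong[where l = node_idx]) (auto simp: inj_on_def node_idx_inject)
  finally show ?thesis .
qed

lemma CARD_kidx: "CARD(kidx) = 17"
proof -
  have "card (node_idx ` J2) = 16"
    using card_J2 by (subst card_image) (auto simp: inj_on_def node_idx_inject)
  then show ?thesis unfolding UNIV_kidx using finite_J2 by (subst card_insert_disjoint) auto
qed

lemma Lam_lam_idx [simp]: "Lam $ lam_idx = 1"
  by (simp add: Lam_def)

lemma Lam_node_idx [simp]: "a \<in> J2 \<Longrightarrow> Lam $ node_idx a = 0"
  by (simp add: Lam_def axis_def)

lemma Nd_lam_idx [simp]: "a \<in> J2 \<Longrightarrow> Nd a $ lam_idx = 0"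
  by (simp add: Nd_def axis_def)

lemma Nd_node_idx: "a \<in> J2 \<Longrightarrow> b \<in> J2 \<Longrightarrow> Nd a $ node_idx b = (if a = b then 1 else 0)"
  by (auto simp: Nd_def axis_def node_idx_inject)

definition gram :: "NSR \<Rightarrow> NSR" where
  "gram x = (\<chi> k. (if k = lam_idx then 4 else -2) * x $ k)"

lemma ip_eq_inner_gram: "ip x y = inner (gram x) y"
proof -
  have "inner (gram x) y = 4 * x $ lam_idx * y $ lam_idx + (\<Sum>a\<in>J2. -2 * x $ node_idx a * y $ node_idx a)"
    unfolding inner_vec_def sum_UNIV_kidx gram_def by (auto intro!: sum.cong)
  then show ?thesis
    unfolding ip_def by (simp add: sum_distrib_left sum_negf algebra_simps)
qed

lemma ip_commute: "ip x y = ip y x"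
  unfolding ip_def by (simp add: mult.commute)

lemma ip_add_right: "ip x (y + z) = ip x y + ip x z"
  by (simp add: ip_eq_inner_gram inner_add_right)

lemma ip_diff_right: "ip x (y - z) = ip x y - ip x z"
  by (simp add: ip_eq_inner_gram inner_diff_right)

lemma ip_scaleR_right: "ip x (r *\<^sub>R y) = r * ip x y"
  by (simp add: ip_eq_inner_gram)

lemma ip_Lam: "ip x Lam = 4 * x $ lam_idx"
  unfolding ip_eq_inner_gram Lam_def inner_axis by (simp add: gram_def)

lemma ip_Nd: "a \<in> J2 \<Longrightarrow> ip x (Nd a) = -2 * x $ node_idx a"
  unfolding ip_eq_inner_gram Nd_def inner_axis by (simp add: gram_def)

lemma ip_sum_Nd:
  assumes "S \<subseteq> J2"
  shows "ip x (\<Sum>a\<in>S. Nd a) = -2 * (\<Sum>a\<in>S. x $ node_idx a)"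
proof -
  have "ip x (\<Sum>a\<in>S. Nd a) = (\<Sum>a\<in>S. ip x (Nd a))"
    by (simp add: ip_eq_inner_gram inner_sum_right)
  also have "\<dots> = (\<Sum>a\<in>S. -2 * x $ node_idx a)"
    using assms by (intro sum.cong) (auto simp: ip_Nd)
  finally show ?thesis by (simp add: sum_distrib_left)
qed

lemma ip_Tr: "b \<in> J2 \<Longrightarrow> ip x (Tr b) = 2 * x $ lam_idx + (\<Sum>a\<in>Itrope b. x $ node_idx a)"
  unfolding Tr_def ip_scaleR_right ip_diff_right ip_Lam by (simp add: ip_sum_Nd Itrope_subset_J2)

lemma switch_Lam_minus_2Nd:
  assumes "a \<in> J2"
  shows "switch (Lam - 2 *\<^sub>R Nd a) = 3 *\<^sub>R Lam - (\<Sum>b\<in>J2. Nd b) - 2 *\<^sub>R Tr a"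
proof -
  have "(\<Sum>b\<in>J2. ((Lam - 2 *\<^sub>R Nd a) $ node_idx b) *\<^sub>R Tr b) = (\<Sum>b\<in>J2. if b = a then -2 *\<^sub>R Tr b else 0)"
    using assms by (intro sum.cong) (auto simp: Nd_node_idx)
  also have "\<dots> = -2 *\<^sub>R Tr a"
    using assms finite_J2 by simp
  finally show ?thesis
    unfolding switch_def using assms by simp
qed

text \<open>A box of classes around \<open>x0\<close> (defined below) on which every wall of \<open>D'\<close> other than
  \<open>R = T_0\<close> is positive.\<close>
definition in_box :: "NSR \<Rightarrow> bool" where
  "in_box x \<longleftrightarrow> 29/2 \<le> x $ lam_idx \<and>
     (\<forall>a\<in>J2. -11/2 \<le> x $ node_idx a \<and> x $ node_idx a < 0 \<and>
        (a \<notin> Itrope {} \<longrightarrow> -7/2 \<le> x $ node_idx a))"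

lemma in_box_sum_ge:
  assumes "in_box x" "S \<subseteq> J2"
  shows "card S * (-11/2) \<le> (\<Sum>a\<in>S. x $ node_idx a)"
  using assms by (intro sum_bounded_below) (auto simp: in_box_def)

lemma in_box_ip_self:
  assumes "in_box x"
  shows "ip x x > 0"
proof -
  let ?Z = "Itrope {}"
  have Z: "?Z \<subseteq> J2" "card ?Z = 6" "card (J2 - ?Z) = 10"
    using empty_in_J2 by (simp_all add: Itrope_subset_J2 card_Itrope card_J2_Diff_Itrope)
  have sq_le: "x $ node_idx a * x $ node_idx a \<le> c * c"
    if "a \<in> J2" "-c \<le> x $ node_idx a" for a c
  proof -
    have "x $ node_idx a < 0"
      using assms that(1) by (simp add: in_box_def)
    then have "(- x $ node_idx a) * (- x $ node_idx a) \<le> c * c"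
      using that(2) by (intro mult_mono) auto
    then show ?thesis by simp
  qed
  have "(\<Sum>a\<in>J2. x $ node_idx a * x $ node_idx a) =
        (\<Sum>a\<in>J2 - ?Z. x $ node_idx a * x $ node_idx a) + (\<Sum>a\<in>?Z. x $ node_idx a * x $ node_idx a)"
    using Z(1) finite_J2 by (rule sum.subset_diff)
  also have "\<dots> \<le> card (J2 - ?Z) * (7/2 * (7/2)) + card ?Z * (11/2 * (11/2))"
    using assms Z(1) by (intro add_mono sum_bounded_above sq_le) (auto simp: in_box_def)
  finally have "(\<Sum>a\<in>J2. x $ node_idx a * x $ node_idx a) \<le> 304"
    using Z by simp
  moreover have "x $ lam_idx * x $ lam_idx \<ge> 29/2 * (29/2)"
    using assms by (intro mult_mono) (auto simp: in_box_def)
  ultimately show ?thesis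
    unfolding ip_def by simp
qed

lemma in_box_ip_Nd: "in_box x \<Longrightarrow> a \<in> J2 \<Longrightarrow> ip x (Nd a) > 0"
  by (simp add: ip_Nd in_box_def)

lemma in_box_ip_Lam_minus_2Nd: "in_box x \<Longrightarrow> a \<in> J2 \<Longrightarrow> ip x (Lam - 2 *\<^sub>R Nd a) > 0"
  by (fastforce simp: ip_diff_right ip_scaleR_right ip_Lam ip_Nd in_box_def)

text \<open>A trope other than \<open>T_0\<close> meets at most two of the six nodes on \<open>T_0\<close>, where the
  coordinates of classes in the box may drop below \<open>-7/2\<close>.\<close>
lemma in_box_ip_Tr:
  assumes x: "in_box x" and b: "b \<in> J2" "b \<noteq> {}"
  shows "ip x (Tr b) > 0"
proof -
  let ?I = "Itrope b"
  let ?Z = "Itrope {}"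
  have sub: "?I \<subseteq> J2" and fin: "finite ?I" and card6: "card ?I = 6"
    using b by (simp_all add: Itrope_subset_J2 finite_Itrope card_Itrope)
  have meet: "card (?I \<inter> ?Z) \<le> 2"
    using b by (rule card_Itrope_Int_Itrope_empty)
  have "card (?I \<inter> ?Z) * (-11/2) + card (?I - ?Z) * (-7/2) \<le>
        (\<Sum>a\<in>?I \<inter> ?Z. x $ node_idx a) + (\<Sum>a\<in>?I - ?Z. x $ node_idx a)"
    using x sub by (intro add_mono sum_bounded_below) (auto simp: in_box_def)
  also have "\<dots> = (\<Sum>a\<in>?I. x $ node_idx a)"
    using fin by (rule sum.Int_Diff[symmetric])
  finally have sum_ge: "card (?I \<inter> ?Z) * (-11/2) + card (?I - ?Z) * (-7/2) \<le> (\<Sum>a\<in>?I. x $ node_idx a)" .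
  have "real (card (?I \<inter> ?Z)) + card (?I - ?Z) = 6" "real (card (?I \<inter> ?Z)) \<le> 2"
    using card_Int_Diff[OF fin, of ?Z] card6 meet by simp_all
  then have "-25 \<le> (\<Sum>a\<in>?I. x $ node_idx a)"
    using sum_ge by linarith
  then show ?thesis
    using x b by (simp add: ip_Tr in_box_def)
qed

lemma in_box_ip_switch:
  assumes x: "in_box x" and a: "a \<in> J2"
  shows "ip x (switch (Lam - 2 *\<^sub>R Nd a)) > 0"
proof -
  have sub: "Itrope a \<subseteq> J2"
    using a by (rule Itrope_subset_J2)
  have "ip x (switch (Lam - 2 *\<^sub>R Nd a)) =
        8 * x $ lam_idx + 2 * ((\<Sum>b\<in>J2. x $ node_idx b) - (\<Sum>b\<in>Itrope a. x $ node_idx b))"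
    using a by (simp add: switch_Lam_minus_2Nd ip_diff_right ip_scaleR_right ip_Lam ip_sum_Nd ip_Tr)
  also have "(\<Sum>b\<in>J2. x $ node_idx b) - (\<Sum>b\<in>Itrope a. x $ node_idx b) = (\<Sum>b\<in>J2 - Itrope a. x $ node_idx b)"
    using finite_J2 sub by (rule sum_diff[symmetric])
  finally show ?thesis
    using in_box_sum_ge[OF x, of "J2 - Itrope a"] x a by (simp add: card_J2_Diff_Itrope in_box_def)
qed

lemma in_box_ip_r_goepel:
  assumes x: "in_box x" and g: "goepel g"
  shows "ip x (r_goepel g) > 0"
proof -
  have "g \<subseteq> J2" "card g = 4"
    using g by (simp_all add: goepel_def)
  then show ?thesis
    using in_box_sum_ge[OF x, of g] x
    by (simp add: r_goepel_def ip_diff_right ip_Lam ip_sum_Nd in_box_def)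
qed

lemma in_box_ip_r_weber:
  assumes x: "in_box x" and w: "weber w"
  shows "ip x (r_weber w) > 0"
proof -
  have "w \<subseteq> J2" "card w = 6"
    using w by (simp_all add: weber_def)
  then show ?thesis
    using in_box_sum_ge[OF x, of w] x
    by (simp add: r_weber_def ip_diff_right ip_scaleR_right ip_Lam ip_sum_Nd in_box_def)
qed

lemma in_box_Dprime:
  assumes x: "in_box x" and R: "ip x Rcls > 0"
  shows "x \<in> Dprime"
proof -
  have "ip x (Tr b) > 0" if "b \<in> J2" for b
    using in_box_ip_Tr[OF x that] R by (cases "b = {}") (simp_all add: Rcls_def)
  then have "\<forall>r\<in>walls. ip x r > 0"
    unfolding walls_def
    using in_box_ip_Nd[OF x] in_box_ip_Lam_minus_2Nd[OF x] in_box_ip_switch[OF x]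
      in_box_ip_r_goepel[OF x] in_box_ip_r_weber[OF x]
    by blast
  moreover have "ip x Lam > 0"
    using x by (simp add: ip_Lam in_box_def)
  ultimately show ?thesis
    unfolding Dprime_def Pcone_def using in_box_ip_self[OF x] by blast
qed

lemma bcls_eq:
  "bcls = (1/2) *\<^sub>R (3 *\<^sub>R Lam - (\<Sum>a\<in>Itrope {}. Nd a) - 2 *\<^sub>R (\<Sum>a\<in>J2 - Itrope {}. Nd a))"
proof -
  have "{1..6::nat} = {1, 2, 3, 4, 5, 6}"
    by auto
  then have on_T0: "(\<Sum>i\<in>{1..6::nat}. Nd (if i = 6 then {} else {i, 6})) = (\<Sum>a\<in>Itrope {}. Nd a)"
    by (simp add: Itrope_eq doubleton_eq_iff ac_simps)
  have "{{i, j} | i j. 1 \<le> i \<and> i < j \<and> j \<le> (5::nat)} = (\<lambda>(i, j). {i, j}) ` {(i, j). 1 \<le> i \<and> i < j \<and> j \<le> 5}"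
    by auto
  also have "\<dots> = J2 - Itrope {}"
    unfolding pairs_upto_5 by (simp add: J2_eq Itrope_eq insert_Diff_if doubleton_eq_iff)
  finally show ?thesis
    unfolding bcls_def on_T0 by simp
qed

lemma sum_Nd_node_idx:
  assumes "a \<in> J2" "S \<subseteq> J2"
  shows "(\<Sum>b\<in>S. Nd a $ node_idx b) = (if a \<in> S then 1 else 0)"
proof -
  have "(\<Sum>b\<in>S. Nd a $ node_idx b) = (\<Sum>b\<in>S. if a = b then 1 else 0)"
    using assms by (intro sum.cong refl Nd_node_idx) auto
  then show ?thesis
    using finite_subset[OF assms(2) finite_J2] by simp
qed

lemma ip_bcls:
  "ip y bcls = 6 * y $ lam_idx + (\<Sum>a\<in>Itrope {}. y $ node_idx a) + 2 * (\<Sum>a\<in>J2 - Itrope {}. y $ node_idx a)"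
  using Itrope_subset_J2[OF empty_in_J2]
  by (simp add: bcls_eq ip_scaleR_right ip_diff_right ip_Lam ip_sum_Nd)

lemma ip_Rcls: "ip y Rcls = 2 * y $ lam_idx + (\<Sum>a\<in>Itrope {}. y $ node_idx a)"
  unfolding Rcls_def using empty_in_J2 by (rule ip_Tr)

lemma ip_Lam_Rcls: "ip Lam Rcls = 2"
  using Itrope_subset_J2[OF empty_in_J2] by (auto simp: ip_Rcls intro!: sum.neutral)

lemma AR_eq_inner_gram: "AR = {y. inner (gram bcls) y = 0 \<and> inner (gram Rcls) y = 0}"
proof -
  have "ip y c = inner (gram c) y" for y c
    by (subst ip_commute) (rule ip_eq_inner_gram)
  then show ?thesis
    unfolding AR_def by simp
qed

lemma subspace_AR: "subspace AR"
  unfolding AR_eq_inner_gram subspace_def by (simp add: inner_add_right)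

lemma dim_inner_kernel_pair:
  fixes u v w :: "'a::euclidean_space"
  assumes v: "v \<noteq> 0" and w: "inner v w = 0" "inner u w \<noteq> 0"
  shows "dim {y. inner u y = 0 \<and> inner v y = 0} = DIM('a) - 2"
proof -
  have u: "u \<notin> span {v}"
  proof
    assume "u \<in> span {v}"
    then have "orthogonal w u"
      by (rule orthogonal_to_span) (use w in \<open>auto simp: orthogonal_def inner_commute\<close>)
    then show False
      using w by (simp add: orthogonal_def inner_commute)
  qed
  have "independent {v}"
    using v by (intro independent_insertI independent_empty) auto
  with u have "independent {u, v}"
    by (rule independent_insertI)
  moreover have "u \<noteq> v"
    using u span_base by blast
  ultimately have dim_span: "dim (span {u, v}) = 2"
    by (simp add: dim_eq_card_independent)
  have "{y. inner u y = 0 \<and> inner v y = 0} = {y \<in> UNIV. \<forall>x \<in> span {u, v}. orthogonal x y}"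
    by (auto simp: orthogonal_def span_base inner_commute intro: orthogonal_to_span[unfolded orthogonal_def])
  moreover have "dim {y \<in> UNIV. \<forall>x \<in> span {u, v}. orthogonal x y} + dim (span {u, v}) = dim (UNIV :: 'a set)"
    by (rule dim_subspace_orthogonal_to_vectors) auto
  ultimately show ?thesis
    using dim_span by simp
qed

lemma dim_AR: "dim AR = 15"
proof -
  have J12: "{1, 2} \<in> J2" "{1, 2} \<notin> Itrope {}"
    by (simp_all add: J2_eq Itrope_eq doubleton_eq_iff)
  have "ip Rcls Lam = 2"
    using ip_Lam_Rcls ip_commute by metis
  then have "gram Rcls \<noteq> 0"
    by (auto simp: ip_eq_inner_gram)
  moreover have "ip Rcls (Nd {1, 2}) = 0" "ip bcls (Nd {1, 2}) = 2"
    using J12 Itrope_subset_J2[OF empty_in_J2]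
    by (simp_all add: ip_commute[of Rcls] ip_commute[of bcls] ip_Rcls ip_bcls sum_Nd_node_idx)
  ultimately show ?thesis
    unfolding AR_eq_inner_gram
    by (subst dim_inner_kernel_pair[where w = "Nd {1, 2}"]) (auto simp: ip_eq_inner_gram CARD_kidx)
qed

definition x0 :: NSR where
  "x0 = (\<chi> k. if k = lam_idx then 15 else if k \<in> node_idx ` Itrope {} then -5 else -3)"

lemma x0_lam_idx: "x0 $ lam_idx = 15"
  by (simp add: x0_def)

lemma x0_node_idx: "a \<in> J2 \<Longrightarrow> x0 $ node_idx a = (if a \<in> Itrope {} then -5 else -3)"
  using Itrope_subset_J2[OF empty_in_J2] by (auto simp: x0_def node_idx_inject)

lemma x0_AR: "x0 \<in> AR"
proof -
  let ?Z = "Itrope {}"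
  have Z: "?Z \<subseteq> J2" "card ?Z = 6" "card (J2 - ?Z) = 10"
    using empty_in_J2 by (simp_all add: Itrope_subset_J2 card_Itrope card_J2_Diff_Itrope)
  have "(\<Sum>a\<in>?Z. x0 $ node_idx a) = (\<Sum>a\<in>?Z. -5)"
    using Z(1) by (intro sum.cong) (auto simp: x0_node_idx)
  moreover have "(\<Sum>a\<in>J2 - ?Z. x0 $ node_idx a) = (\<Sum>a\<in>J2 - ?Z. -3)"
    by (intro sum.cong) (auto simp: x0_node_idx)
  ultimately show ?thesis
    unfolding AR_def ip_bcls ip_Rcls using Z by (simp add: x0_lam_idx)
qed

lemma in_box_near_x0:
  assumes y: "dist x0 y < 1/2" and e: "0 \<le> e"
  shows "in_box (y + e *\<^sub>R Lam)"
proof -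
  have near: "\<bar>y $ k - x0 $ k\<bar> < 1/2" for k
    using component_le_norm_cart[of "y - x0" k] y by (simp add: dist_norm norm_minus_commute)
  have "29/2 \<le> y $ lam_idx"
    using near[of lam_idx] unfolding x0_lam_idx abs_less_iff by linarith
  moreover have "-11/2 \<le> y $ node_idx a \<and> y $ node_idx a < 0 \<and> (a \<notin> Itrope {} \<longrightarrow> -7/2 \<le> y $ node_idx a)"
    if "a \<in> J2" for a
    using near[of "node_idx a"] x0_node_idx[OF that] unfolding abs_less_iff
    by (cases "a \<in> Itrope {}") auto
  ultimately show ?thesis
    unfolding in_box_def using e by simp
qed

text \<open>Pushing a class of \<open>A \<otimes> \<real>\<close> near \<open>x0\<close> slightly towards \<open>\<Lambda>\<close> makes its
  pairing with \<open>R\<close>, which vanishes on \<open>A \<otimes> \<real>\<close>, positive.\<close>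
lemma AR_near_x0_closure_Dprime:
  assumes A: "y \<in> AR" and y: "dist x0 y < 1/2"
  shows "y \<in> closure Dprime"
  unfolding closure_approachable
proof (intro allI impI)
  fix e :: real assume "e > 0"
  have "ip (y + (e/2) *\<^sub>R Lam) Rcls = e"
    using A ip_Lam_Rcls by (simp add: ip_commute[of _ Rcls] ip_add_right ip_scaleR_right AR_def)
  then have "y + (e/2) *\<^sub>R Lam \<in> Dprime"
    using \<open>e > 0\<close> in_box_near_x0[OF y] by (intro in_box_Dprime) auto
  moreover have "dist (y + (e/2) *\<^sub>R Lam) y < e"
    using \<open>e > 0\<close> by (simp add: dist_norm Lam_def)
  ultimately show "\<exists>z\<in>Dprime. dist z y < e"
    by blast
qed

theorem proposition4p2:
  shows "aff_dim Omega = 15 \<and> dim AR = 15"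
proof -
  have "AR \<inter> ball x0 (1/2) \<subseteq> Omega"
    unfolding Omega_def using AR_near_x0_closure_Dprime by auto
  moreover have "Omega \<subseteq> AR"
    unfolding Omega_def by auto
  moreover have "aff_dim (AR \<inter> ball x0 (1/2)) = aff_dim AR"
    using subspace_imp_convex[OF subspace_AR] x0_AR by (intro aff_dim_convex_Int_open) auto
  moreover have "aff_dim AR = 15"
    using aff_dim_subspace[OF subspace_AR] dim_AR by simp
  ultimately show ?thesis
    using aff_dim_subset[of "AR \<inter> ball x0 (1/2)" Omega] aff_dim_subset[of Omega AR] dim_AR
    by linarith
qed

end
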